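(* Let $X$ be the Brady complex of $B_4$. Let $R$ be a lozenge of $X$. Then every boundary edge of $R$ is incident to exactly one triangle of $X$ and exactly one lozenge $R'\neq R$ of $X$; moreover $R\cup R'$ is isometric to a (Euclidean) parallelogram.
   Context: Let $B_4=\langle a,b,c,d,e,f\mid ba=ae=eb,\ de=ec=cd,\ bc=cf=fb,\ df=fa=ad,\ ca=ac,\ ef=fe\rangle$ (the 4-string braid group) and $x=bac$. There are exactly sixteen factorizations $x=a_1a_2a_3$ with $a_i\in\{a,\dots,f\}$ (the cyclic length-3 subwords of $bcadefbacdfe$ and $faecfaecfaec$). Brady's complex $V$ has one vertex and one Euclidean tetrahedron for each such factorization, with vertices $v_0,\dots,v_3$, edges $v_{i-1}v_i$ labelled $a_i$ (length 1), $v_0v_2,v_1v_3$ labelled by the group elements $a_1a_2,a_2a_3$ (length $\sqrt2$), and $v_0v_3$ labelled $x$ (length $\sqrt3$), tetrahedra being glued along edges with equal labels; $\pi_1(V)=B_4$ and its universal cover $Y$ is a CAT(0) 3-dimensional simplicial complex on which $B_4$ acts freely cocompactly. $Y$ splits isometrically as $X\times\mathbb{R}$, the $\mathbb{R}$-factor being the direction of the central element $z=x^4$; $X$ (the Brady complex) is a 2-dimensional CAT(0) simplicial complex whose faces are Euclidean equilateral triangles, with a proper cocompact action of $B_4/\langle z\rangle$. The link of every vertex of $X$ is isomorphic to the graph $L$ obtained from the incidence graph of the Fano plane by deleting two adjacent vertices (and their incident edges), edges having length $\pi/3$. A lozenge of $X$ is the union of two faces glued along an edge of valence 2 (an edge contained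 in exactly two faces); a triangle of $X$ is a face not contained in a lozenge. *)

theory Defs
  imports Main
begin

section \<open>The 4-string braid group B_4 in Brady's dual presentation\<close>

datatype gen = A | B | C | D | E | F

text \<open>Words in the generators and their inverses: (s, True) is s, (s, False) is s^-1.\<close>
type_synonym word = "(gen \<times> bool) list"

definition pw :: "gen list \<Rightarrow> word" where
  "pw xs = map (\<lambda>s. (s, True)) xs"

definition braid_rels :: "(word \<times> word) set" where
  "braid_rels = {(pw [B,A], pw [A,E]), (pw [A,E], pw [E,B]),
                 (pw [D,E], pw [E,C]), (pw [E,C], pw [C,D]),
                 (pw [B,C], pw [C,F]), (pw [C,F], pw [F,B]),
                 (pw [D,F], pw [F,A]), (pw [F,A], pw [A,D]),
                 (pw [C,A], pw [A,C]), (pw [E,F], pw [F,E])}"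

text \<open>Equality in B_4: the congruence on words generated by free cancellation and the relations.\<close>
inductive beq :: "word \<Rightarrow> word \<Rightarrow> bool" where
  beq_refl: "beq w w"
| beq_sym: "beq u v \<Longrightarrow> beq v u"
| beq_trans: "beq u v \<Longrightarrow> beq v w \<Longrightarrow> beq u w"
| beq_cancel: "beq (u @ [(s, b), (s, \<not> b)] @ v) (u @ v)"
| beq_rel: "(l, r) \<in> braid_rels \<Longrightarrow> beq (u @ l @ v) (u @ r @ v)"

definition inv_word :: "word \<Rightarrow> word" where
  "inv_word w = rev (map (\<lambda>(s, b). (s, \<not> b)) w)"

definition xw :: word where
  "xw = pw [B, A, C]"

definition xpow :: "int \<Rightarrow> word" where
  "xpow k = (if 0 \<le> k then concat (replicate (nat k) xw)
             else concat (replicate (nat (- k)) (inv_word xw)))"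

text \<open>Vertices of X: left cosets g<x> of the cyclic subgroup generated by x,
  represented as the set of all words representing an element of the coset.\<close>
type_synonym vertex = "word set"

definition vtx :: "word \<Rightarrow> vertex" where
  "vtx g = {v. \<exists>k::int. beq (g @ xpow k) v}"

text \<open>The sixteen factorizations x = a1 a2 a3: cyclic length-3 subwords of
  bcadefbacdfe and faecfaecfaec.\<close>
definition cyc3 :: "gen list \<Rightarrow> gen list set" where
  "cyc3 w = {[w ! i, w ! ((i + 1) mod length w), w ! ((i + 2) mod length w)] | i. i < length w}"

definition factorizations :: "gen list set" where
  "factorizations = cyc3 [B,C,A,D,E,F,B,A,C,D,F,E] \<union> cyc3 [F,A,E,C,F,A,E,C,F,A,E,C]"

text \<open>Faces of X: the tetrahedron of Y at g for the factorization a1 a2 a3 has vertices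
  g, g a1, g a1 a2, g x; projecting along the x-direction gives the equilateral triangle
  with vertices g<x>, g a1<x>, g a1 a2<x>.\<close>
definition Xfaces :: "vertex set set" where
  "Xfaces = {{vtx g, vtx (g @ pw [a1]), vtx (g @ pw [a1, a2])} | g a1 a2 a3.
               [a1, a2, a3] \<in> factorizations}"

definition valence :: "vertex set \<Rightarrow> nat" where
  "valence e = card {T \<in> Xfaces. e \<subseteq> T}"

definition is_lozenge :: "vertex set set \<Rightarrow> bool" where
  "is_lozenge R \<longleftrightarrow> (\<exists>T1 T2. T1 \<in> Xfaces \<and> T2 \<in> Xfaces \<and> T1 \<noteq> T2 \<and> R = {T1, T2}
       \<and> card (T1 \<inter> T2) = 2 \<and> valence (T1 \<inter> T2) = 2)"

definition is_triangle :: "vertex set \<Rightarrow> bool" where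
  "is_triangle T \<longleftrightarrow> T \<in> Xfaces \<and> \<not> (\<exists>R. is_lozenge R \<and> T \<in> R)"

definition boundary_edge :: "vertex set set \<Rightarrow> vertex set \<Rightarrow> bool" where
  "boundary_edge R e \<longleftrightarrow> card e = 2 \<and> (\<exists>T\<in>R. e \<subseteq> T) \<and> \<not> (\<forall>T\<in>R. e \<subseteq> T)"

text \<open>A set P of faces forms a Euclidean parallelogram: it is simplicially isomorphic to the
  parallelogram with side lengths 2 and 1 triangulated by four unit equilateral triangles,
  with bottom vertices p0,p1,p2 (indices 0,1,2) and top vertices q0,q1,q2 (indices 3,4,5),
  triangles p0p1q0, p1q0q1, p1p2q1, p2q1q2.\<close>
definition is_parallelogram :: "vertex set set \<Rightarrow> bool" where
  "is_parallelogram P \<longleftrightarrow> (\<exists>\<phi> :: nat \<Rightarrow> vertex. inj_on \<phi> {0..5} \<and>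
       P = {\<phi> ` {0,1,3}, \<phi> ` {1,3,4}, \<phi> ` {1,2,4}, \<phi> ` {2,4,5}})"

end

theory Submission
  imports Defs
begin

text \<open>The faces of X are the triangles g<x>, g a1<x>, g a1 a2<x> attached to the sixteen
  factorizations x = a1 a2 a3, and the edge g<x>, g s<x> lies in one face for every factorization
  beginning with s: two faces if s is b or d, three otherwise. Hence the lozenges are exactly the
  pairs of faces around b- and d-edges; as no factorization contains both b and d, a face lies in
  at most one lozenge, and it is a triangle iff its factorization avoids b and d. The boundary
  edges of a lozenge are a- and c-edges. Exactly one of the three faces around such an edge is a
  triangle, so at most two lozenges meet there, and the second one is exhibited explicitly
  together with the six vertices of the parallelogram. Identities in B_4 are certified by
  rewriting paths in the positive monoid, and vertices are told apart by the exponent sum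
  modulo 3 and the image in S_4 of a normalised coset representative.\<close>

declare beq_trans [trans]

lemma pw_simps [simp]:
  "pw [] = []"
  "pw (s # w) = (s, True) # pw w"
  "pw (u @ v) = pw u @ pw v"
  by (simp_all add: pw_def)

lemma beq_append_context: "beq v v' \<Longrightarrow> beq (p @ v @ q) (p @ v' @ q)"
proof (induction rule: beq.induct)
  case (beq_cancel u s b v)
  show ?case using beq.beq_cancel[of "p @ u" s b "v @ q"] by simp
next
  case (beq_rel l r u v)
  show ?case using beq.beq_rel[OF beq_rel, of "p @ u" "v @ q"] by simp
qed (auto intro: beq.intros)

lemma beq_append: "beq u u' \<Longrightarrow> beq v v' \<Longrightarrow> beq (u @ v) (u' @ v')"
  using beq_append_context[of u u' "[]" v] beq_append_context[of v v' u' "[]"]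
  by (auto intro: beq_trans)

lemma inv_word_Cons: "inv_word ((s, b) # w) = inv_word w @ [(s, \<not> b)]"
  by (simp add: inv_word_def)

lemma beq_append_inv_word: "beq (w @ inv_word w) []"
proof (induction w)
  case Nil
  show ?case by (simp add: inv_word_def beq_refl)
next
  case (Cons sb w)
  obtain s b where sb: "sb = (s, b)" by force
  have "(sb # w) @ inv_word (sb # w) = [sb] @ (w @ inv_word w) @ [(s, \<not> b)]"
    by (simp add: sb inv_word_Cons)
  also have "beq \<dots> ([] @ [(s, b), (s, \<not> b)] @ [])"
    using beq_append_context[OF Cons.IH, of "[sb]" "[(s, \<not> b)]"] by (simp add: sb)
  also have "beq \<dots> ([] @ [])"
    by (rule beq_cancel)
  finally show ?case by simp
qed

lemma beq_inv_word_append: "beq (inv_word w @ w) []"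
proof (induction w)
  case Nil
  show ?case by (simp add: inv_word_def beq_refl)
next
  case (Cons sb w)
  obtain s b where sb: "sb = (s, b)" by force
  have "beq (inv_word w @ [(s, \<not> b), (s, \<not> \<not> b)] @ w) (inv_word w @ w)"
    by (rule beq_cancel)
  also note Cons.IH
  finally show ?case by (simp add: sb inv_word_Cons)
qed

lemma beq_cancel_left: "beq (h @ u) (h @ v) \<Longrightarrow> beq u v"
proof -
  assume "beq (h @ u) (h @ v)"
  then have "beq ((inv_word h @ h) @ u) ((inv_word h @ h) @ v)"
    using beq_append[OF beq_refl] by fastforce
  then show ?thesis
    using beq_append[OF beq_inv_word_append beq_refl, of h u]
      beq_append[OF beq_inv_word_append beq_refl, of h v]
    by (metis append_Nil beq_sym beq_trans)
qed

section \<open>Two homomorphisms out of B_4\<close>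

definition exp_sum :: "word \<Rightarrow> int" where
  "exp_sum w = (\<Sum>(s, b)\<leftarrow>w. if b then 1 else -1)"

lemma exp_sum_simps [simp]:
  "exp_sum [] = 0"
  "exp_sum ((s, b) # w) = (if b then 1 else -1) + exp_sum w"
  "exp_sum (u @ v) = exp_sum u + exp_sum v"
  by (simp_all add: exp_sum_def)

lemma beq_exp_sum: "beq u v \<Longrightarrow> exp_sum u = exp_sum v"
  by (induction rule: beq.induct) (auto simp: braid_rels_def)

text \<open>The natural map B_4 \<rightarrow> S_4 sends each generator to a transposition, so inverse
  letters act like the letters themselves.\<close>

fun gen_perm :: "gen \<Rightarrow> nat \<Rightarrow> nat" where
  "gen_perm A = id(0 := 1, 1 := 0)"
| "gen_perm B = id(0 := 2, 2 := 0)"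
| "gen_perm C = id(2 := 3, 3 := 2)"
| "gen_perm D = id(1 := 3, 3 := 1)"
| "gen_perm E = id(1 := 2, 2 := 1)"
| "gen_perm F = id(0 := 3, 3 := 0)"

definition perm_of :: "word \<Rightarrow> nat \<Rightarrow> nat" where
  "perm_of w = foldr (\<lambda>(s, b) p. gen_perm s \<circ> p) w id"

lemma perm_of_simps [simp]:
  "perm_of [] = id"
  "perm_of ((s, b) # w) = gen_perm s \<circ> perm_of w"
  "perm_of (u @ v) = perm_of u \<circ> perm_of v"
  by (simp_all add: perm_of_def, induction u) auto

lemma gen_perm_involution: "gen_perm s (gen_perm s n) = n"
  by (cases s) auto

lemma perm_of_eqI:
  assumes "\<forall>n<4. perm_of u n = perm_of v n"
  shows "perm_of u = perm_of v"
proof -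
  have fixed: "perm_of w n = n" if "n \<ge> 4" for w n
  proof (induction w)
    case (Cons sb w)
    obtain s b where "sb = (s, b)" by force
    with Cons that show ?case by (cases s) auto
  qed simp
  show ?thesis
    using assms fixed by (metis not_le ext)
qed

lemma beq_perm_of: "beq u v \<Longrightarrow> perm_of u = perm_of v"
proof (induction rule: beq.induct)
  case (beq_cancel u s b v)
  then show ?case by (simp add: fun_eq_iff gen_perm_involution)
next
  case (beq_rel l r u v)
  then have "perm_of l = perm_of r"
    unfolding braid_rels_def
    by (auto intro!: perm_of_eqI simp: less_Suc_eq numeral_eq_Suc)
  then show ?case by simp
qed auto

definition relation_pairs :: "(gen list \<times> gen list) list" where
  "relation_pairs = [([B,A],[A,E]), ([A,E],[E,B]), ([D,E],[E,C]), ([E,C],[C,D]), ([B,C],[C,F]),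
     ([C,F],[F,B]), ([D,F],[F,A]), ([F,A],[A,D]), ([C,A],[A,C]), ([E,F],[F,E])]"

definition rewrite_step :: "gen list \<Rightarrow> gen list list" where
  "rewrite_step xs = concat (map (\<lambda>i. concat (map (\<lambda>(l, r).
     if take 2 (drop i xs) = l then [take i xs @ r @ drop (i + 2) xs] else [])
     (relation_pairs @ map prod.swap relation_pairs))) [0..<length xs])"

fun rewrites_to :: "gen list \<Rightarrow> gen list list \<Rightarrow> gen list \<Rightarrow> bool" where
  "rewrites_to x [] y \<longleftrightarrow> x = y"
| "rewrites_to x (z # zs) y \<longleftrightarrow> z \<in> set (rewrite_step x) \<and> rewrites_to z zs y"

lemma relation_pair_beq:
  assumes "(l, r) \<in> set relation_pairs \<or> (r, l) \<in> set relation_pairs"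
  shows "beq (pw l) (pw r)"
proof -
  have "\<forall>(l, r) \<in> set relation_pairs. (pw l, pw r) \<in> braid_rels"
    by (simp add: relation_pairs_def braid_rels_def)
  then have rel: "(pw l, pw r) \<in> braid_rels" if "(l, r) \<in> set relation_pairs" for l r
    using that by blast
  have "beq (pw l) (pw r)" if "(l, r) \<in> set relation_pairs" for l r
    using beq_rel[OF rel[OF that], of "[]" "[]"] by simp
  then show ?thesis
    using assms beq_sym by blast
qed

lemma rewrite_step_beq: "ys \<in> set (rewrite_step xs) \<Longrightarrow> beq (pw xs) (pw ys)"
proof -
  assume "ys \<in> set (rewrite_step xs)"
  then obtain i l r where
    rule: "(l, r) \<in> set relation_pairs \<or> (r, l) \<in> set relation_pairs" and
    l: "take 2 (drop i xs) = l" and ys: "ys = take i xs @ r @ drop (i + 2) xs"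
    unfolding rewrite_step_def by (auto split: if_splits)
  have "xs = take i xs @ take 2 (drop i xs) @ drop 2 (drop i xs)"
    by (simp only: append_take_drop_id)
  then have xs: "xs = take i xs @ l @ drop (i + 2) xs"
    using l by (simp add: add.commute)
  show ?thesis
    using beq_append_context[OF relation_pair_beq[OF rule],
        of "pw (take i xs)" "pw (drop (i + 2) xs)"]
    by (subst xs, subst ys) (simp only: pw_simps)
qed

lemma rewrites_to_beq: "rewrites_to x zs y \<Longrightarrow> beq (pw x) (pw y)"
proof (induction x zs y rule: rewrites_to.induct)
  case (2 x z zs y)
  then show ?case using rewrite_step_beq beq_trans by (meson rewrites_to.simps(2))
qed (simp add: beq_refl)

section \<open>Conjugation by x\<close>

fun psi :: "gen \<Rightarrow> gen" where
  "psi A = E" | "psi B = D" | "psi C = F" | "psi D = B" | "psi E = C" | "psi F = A"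

lemma psi_pow_mod: "psi ^^ n = psi ^^ (n mod 4)"
proof -
  have "psi ^^ 4 = id"
    by (rule ext, case_tac x) (simp_all add: numeral_eq_Suc)
  then have "psi ^^ (4 * (n div 4)) = id"
    by (simp add: funpow_mult[symmetric])
  moreover have "psi ^^ n = psi ^^ (n mod 4) \<circ> psi ^^ (4 * (n div 4))"
    by (simp add: funpow_add[symmetric])
  ultimately show ?thesis by simp
qed

fun x_conj_path :: "gen \<Rightarrow> gen list list" where
  "x_conj_path A = [[A,E,C,A], [E,B,C,A], [E,B,A,C]]"
| "x_conj_path B =
     [[A,E,C,B], [E,B,C,B], [E,C,F,B], [D,E,F,B], [D,E,C,F], [D,E,B,C], [D,A,E,C], [D,B,A,C]]"
| "x_conj_path C = [[B,C,A,C], [C,F,A,C], [F,B,A,C]]"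
| "x_conj_path D = [[B,A,E,C], [B,B,A,C]]"
| "x_conj_path E = [[A,E,C,E], [A,C,D,E], [C,A,D,E], [C,A,E,C], [C,B,A,C]]"
| "x_conj_path F = [[A,E,C,F], [A,E,B,C], [A,A,E,C], [A,B,A,C]]"

lemma xw_conj_gen: "beq (xw @ pw [s]) (pw [psi s] @ xw)"
proof -
  have "rewrites_to [B,A,C,s] (x_conj_path s) [psi s, B,A,C]"
    by (cases s) (simp_all add: rewrite_step_def relation_pairs_def)
  then show ?thesis
    using rewrites_to_beq by (fastforce simp: xw_def)
qed

lemma xw_conj: "beq (xw @ pw w) (pw (map psi w) @ xw)"
proof (induction w)
  case (Cons s w)
  have "xw @ pw (s # w) = (xw @ pw [s]) @ pw w"
    by simp
  also have "beq \<dots> ((pw [psi s] @ xw) @ pw w)"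
    by (rule beq_append[OF xw_conj_gen beq_refl])
  also have "\<dots> = pw [psi s] @ (xw @ pw w)"
    by simp
  also have "beq \<dots> (pw [psi s] @ (pw (map psi w) @ xw))"
    by (rule beq_append[OF beq_refl Cons.IH])
  finally show ?case by simp
qed (simp add: beq_refl)

lemma xpow_0 [simp]: "xpow 0 = []"
  by (simp add: xpow_def)

lemma xpow_of_nat: "xpow (int n) = concat (replicate n xw)"
  by (simp add: xpow_def)

lemma xpow_of_nat_Suc: "xpow (int (Suc n)) = xpow (int n) @ xw"
  unfolding xpow_of_nat replicate_Suc replicate_append_same[symmetric] by simp

lemma xpow_conj: "beq (xpow (int n) @ pw w) (pw (map (psi ^^ n) w) @ xpow (int n))"
proof (induction n arbitrary: w)
  case 0
  show ?case by (simp add: beq_refl)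
next
  case (Suc n)
  have "xpow (int (Suc n)) @ pw w = xpow (int n) @ (xw @ pw w)"
    by (simp only: xpow_of_nat_Suc append_assoc)
  also have "beq \<dots> (xpow (int n) @ (pw (map psi w) @ xw))"
    by (rule beq_append[OF beq_refl xw_conj])
  also have "\<dots> = (xpow (int n) @ pw (map psi w)) @ xw"
    by simp
  also have "beq \<dots> ((pw (map (psi ^^ n) (map psi w)) @ xpow (int n)) @ xw)"
    by (rule beq_append[OF Suc.IH beq_refl])
  finally show ?case
    unfolding xpow_of_nat_Suc by (simp add: funpow_Suc_right comp_def del: funpow.simps)
qed

lemma xpow_succ: "beq (xpow (k + 1)) (xpow k @ xw)"
proof (cases "k \<ge> 0")
  case True
  then show ?thesis
    using xpow_of_nat_Suc[of "nat k"] by (simp add: beq_refl add.commute)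
next
  case False
  define n where "n = nat (- k) - 1"
  have k: "k = - int (Suc n)"
    using False by (simp add: n_def)
  have "xpow k = xpow (k + 1) @ inv_word xw"
    using k by (simp add: xpow_def nat_add_distrib replicate_append_same[symmetric])
  then show ?thesis
    using beq_append[OF beq_refl beq_inv_word_append, of "xpow (k + 1)" xw]
    by (simp add: beq_sym)
qed

lemma xpow_pred: "beq (xpow (k - 1)) (xpow k @ inv_word xw)"
proof -
  have "beq (xpow (k - 1) @ []) (xpow (k - 1) @ xw @ inv_word xw)"
    by (rule beq_append[OF beq_refl beq_sym[OF beq_append_inv_word]])
  also have "beq (xpow (k - 1) @ xw @ inv_word xw) (xpow k @ inv_word xw)"
    using beq_append[OF beq_sym[OF xpow_succ[of "k - 1"]] beq_refl] by simp
  finally show ?thesis by simp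
qed

lemma xpow_add: "beq (xpow k @ xpow m) (xpow (k + m))"
proof (induction m rule: int_induct[where k = 0])
  case base
  show ?case by (simp add: beq_refl)
next
  case (step1 m)
  have "beq (xpow k @ xpow (m + 1)) (xpow k @ xpow m @ xw)"
    by (rule beq_append[OF beq_refl xpow_succ])
  also have "beq (xpow k @ xpow m @ xw) (xpow (k + m) @ xw)"
    using beq_append[OF step1(2) beq_refl] by simp
  also have "beq (xpow (k + m) @ xw) (xpow (k + (m + 1)))"
    using beq_sym[OF xpow_succ[of "k + m"]] by (simp add: add.assoc)
  finally show ?case by simp
next
  case (step2 m)
  have "beq (xpow k @ xpow (m - 1)) (xpow k @ xpow m @ inv_word xw)"
    by (rule beq_append[OF beq_refl xpow_pred])
  also have "beq (xpow k @ xpow m @ inv_word xw) (xpow (k + m) @ inv_word xw)"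
    using beq_append[OF step2(2) beq_refl] by simp
  also have "beq (xpow (k + m) @ inv_word xw) (xpow (k + (m - 1)))"
    using beq_sym[OF xpow_pred] by (simp add: algebra_simps)
  finally show ?case by simp
qed

lemma exp_sum_xpow: "exp_sum (xpow k) = 3 * k"
proof -
  have rep: "exp_sum (concat (replicate n w)) = int n * exp_sum w" for n w
    by (induction n) (simp_all add: algebra_simps)
  have inv: "exp_sum (inv_word w) = - exp_sum w" for w
    by (induction w) (auto simp: inv_word_def)
  show ?thesis
    by (simp add: xpow_def rep inv xw_def)
qed

lemma exp_sum_pw [simp]: "exp_sum (pw w) = int (length w)"
  by (induction w) simp_all

lemma beq_xpow_flip: "beq (u @ xpow k) v \<Longrightarrow> beq (v @ xpow (- k)) u"
proof -
  assume uv: "beq (u @ xpow k) v"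
  have "beq (v @ xpow (- k)) (u @ xpow k @ xpow (- k))"
    using beq_append[OF beq_sym[OF uv] beq_refl] by simp
  also have "beq \<dots> u"
    using beq_append[OF beq_refl xpow_add[of k "- k"], of u] by simp
  finally show ?thesis .
qed

lemma vtx_eq_iff: "vtx u = vtx v \<longleftrightarrow> (\<exists>k. beq (u @ xpow k) v)"
proof -
  have compose: "beq (u @ xpow (k + m)) w"
    if "beq (u @ xpow k) v" "beq (v @ xpow m) w" for u v w k m
  proof -
    have "beq (u @ xpow (k + m)) ((u @ xpow k) @ xpow m)"
      using beq_append[OF beq_refl beq_sym[OF xpow_add], of u] by simp
    also have "beq \<dots> (v @ xpow m)"
      by (rule beq_append[OF that(1) beq_refl])
    finally show ?thesis using that(2) by (rule beq_trans)
  qed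
  show ?thesis
  proof
    assume "vtx u = vtx v"
    moreover have "v \<in> vtx v"
      unfolding vtx_def by (auto intro!: exI[of _ 0] simp: beq_refl)
    ultimately show "\<exists>k. beq (u @ xpow k) v"
      by (auto simp: vtx_def)
  next
    assume "\<exists>k. beq (u @ xpow k) v"
    then obtain k where k: "beq (u @ xpow k) v" ..
    show "vtx u = vtx v"
      unfolding vtx_def using compose[OF k] compose[OF beq_xpow_flip[OF k]] by blast
  qed
qed

lemma vtx_beq: "beq u v \<Longrightarrow> vtx u = vtx v"
  unfolding vtx_eq_iff by (intro exI[of _ 0]) simp

lemma vtx_append_xpow: "vtx (u @ xpow k) = vtx u"
  unfolding vtx_eq_iff using beq_append[OF beq_refl xpow_add[of k "- k"], of u]
  by (intro exI[of _ "- k"]) simp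

lemma vtx_append_xw: "vtx (u @ xw) = vtx u"
  using vtx_append_xpow[of u 1] by (simp add: xpow_def)

lemma vtx_append_left_eq_iff: "vtx (h @ u) = vtx (h @ v) \<longleftrightarrow> vtx u = vtx v"
proof -
  have "beq (h @ u @ xpow k) (h @ v) \<longleftrightarrow> beq (u @ xpow k) v" for k
    by (meson beq_cancel_left beq_append beq_refl)
  then show ?thesis
    unfolding vtx_eq_iff by simp
qed

text \<open>Every coset u<x> has a representative with exponent sum in {0, 1, 2}; its residue and its
  image in S_4 therefore only depend on the vertex.\<close>

definition vertex_invariant :: "word \<Rightarrow> int \<times> nat list" where
  "vertex_invariant u =
     (exp_sum u mod 3, map (perm_of (u @ xpow (- (exp_sum u div 3)))) [0, 1, 2, 3])"

lemma vertex_invariant_eq: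
  assumes "vtx u = vtx v"
  shows "vertex_invariant u = vertex_invariant v"
proof -
  obtain k where k: "beq (u @ xpow k) v"
    using assms vtx_eq_iff by blast
  have exp_v: "exp_sum v = exp_sum u + 3 * k"
    using beq_exp_sum[OF k] by (simp add: exp_sum_xpow)
  define d where "d = exp_sum u div 3"
  have "beq (v @ xpow (- (d + k))) (u @ xpow k @ xpow (- (d + k)))"
    using beq_append[OF beq_sym[OF k] beq_refl] by simp
  also have "beq \<dots> (u @ xpow (- d))"
    using beq_append[OF beq_refl xpow_add[of k "- (d + k)"], of u] by simp
  finally have "perm_of (v @ xpow (- (d + k))) = perm_of (u @ xpow (- d))"
    by (rule beq_perm_of)
  moreover have "exp_sum v div 3 = d + k" "exp_sum v mod 3 = exp_sum u mod 3"
    using exp_v by (simp_all add: d_def)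
  ultimately show ?thesis
    unfolding vertex_invariant_def d_def by simp
qed

lemma vertex_invariant_eq_append:
  "vtx (h @ u) = vtx (h @ v) \<Longrightarrow> vertex_invariant u = vertex_invariant v"
  by (intro vertex_invariant_eq) (simp only: vtx_append_left_eq_iff)

lemma vertex_invariant_gen: "vertex_invariant (pw [s]) = (1, map (gen_perm s) [0, 1, 2, 3])"
  by (simp add: vertex_invariant_def)

lemma vtx_gen_eq_iff: "vtx (h @ pw [s]) = vtx (h @ pw [t]) \<longleftrightarrow> s = t"
proof
  assume "vtx (h @ pw [s]) = vtx (h @ pw [t])"
  then have "vertex_invariant (pw [s]) = vertex_invariant (pw [t])"
    by (rule vertex_invariant_eq_append)
  then have "map (gen_perm s) [0, 1, 2, 3] = map (gen_perm t) [0, 1, 2, 3]"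
    by (simp only: vertex_invariant_gen prod.inject)
  then show "s = t"
    by (cases s; cases t) simp_all
qed simp

lemma vtx_neq_if_length_mod_neq:
  assumes "length u mod 3 \<noteq> length w mod 3"
  shows "vtx (h @ pw u) \<noteq> vtx (h @ pw w)"
proof
  assume "vtx (h @ pw u) = vtx (h @ pw w)"
  then have "vertex_invariant (pw u) = vertex_invariant (pw w)"
    by (rule vertex_invariant_eq_append)
  then have "int (length u) mod 3 = int (length w) mod 3"
    unfolding vertex_invariant_def exp_sum_pw by (simp only: prod.inject)
  then have "int (length u mod 3) = int (length w mod 3)"
    by (simp only: zmod_int of_nat_numeral)
  then show False
    using assms by (simp only: of_nat_eq_iff)
qed

lemma distinct_vtx:
  assumes "distinct (map (\<lambda>w. vertex_invariant (pw w)) ws)"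
  shows "distinct (map (\<lambda>w. vtx (h @ pw w)) ws)"
proof -
  have inj: "inj_on (\<lambda>w. vertex_invariant (pw w)) (set ws)"
    using assms by (simp only: distinct_map)
  have "inj_on (\<lambda>w. vtx (h @ pw w)) (set ws)"
  proof (rule inj_onI)
    fix a b
    assume "a \<in> set ws" "b \<in> set ws" and eq: "vtx (h @ pw a) = vtx (h @ pw b)"
    moreover have "vertex_invariant (pw a) = vertex_invariant (pw b)"
      using eq by (rule vertex_invariant_eq_append)
    ultimately show "a = b"
      using inj unfolding inj_on_def by blast
  qed
  then show ?thesis
    using assms by (simp only: distinct_map)
qed

definition factorization_list :: "gen list list" where
  "factorization_list = [[A,C,D], [A,D,E], [A,E,C], [B,A,C], [B,C,A], [C,A,D], [C,D,F], [C,F,A],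
     [D,E,F], [D,F,E], [E,B,C], [E,C,F], [E,F,B], [F,A,E], [F,B,A], [F,E,B]]"

lemma cyc3_eq:
  "cyc3 w = set (map (\<lambda>i. [w ! i, w ! ((i + 1) mod length w), w ! ((i + 2) mod length w)])
     [0..<length w])"
  unfolding cyc3_def by auto

lemma factorizations_eq: "factorizations = set factorization_list"
  unfolding factorizations_def cyc3_eq factorization_list_def by (simp add: upt_conv_Cons) auto

lemma factorization_beq_xw:
  assumes "f \<in> factorizations"
  shows "beq (pw f) xw"
proof -
  have "list_all2 (\<lambda>f zs. rewrites_to f zs [B,A,C]) factorization_list
    [[[A,E,C], [B,A,C]], [[A,E,C], [B,A,C]], [[B,A,C]], [], [[B,A,C]],
     [[A,C,D], [A,E,C], [B,A,C]], [[C,F,A], [B,C,A], [B,A,C]], [[B,C,A], [B,A,C]],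
     [[E,C,F], [E,B,C], [A,E,C], [B,A,C]], [[F,A,E], [A,D,E], [A,E,C], [B,A,C]],
     [[A,E,C], [B,A,C]], [[E,B,C], [A,E,C], [B,A,C]], [[E,C,F], [E,B,C], [A,E,C], [B,A,C]],
     [[A,D,E], [A,E,C], [B,A,C]], [[C,F,A], [B,C,A], [B,A,C]],
     [[F,A,E], [A,D,E], [A,E,C], [B,A,C]]]"
    by (simp add: factorization_list_def rewrite_step_def relation_pairs_def)
  then obtain zs where "rewrites_to f zs [B,A,C]"
    using assms unfolding factorizations_eq list_all2_conv_all_nth in_set_conv_nth by metis
  then show ?thesis
    unfolding xw_def by (rule rewrites_to_beq)
qed

lemma factorization_cases:
  assumes "f \<in> factorizations"
  obtains a b c where "f = [a, b, c]"
  using assms unfolding factorizations_eq factorization_list_def by auto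

text \<open>If a b c = x then b c (x^-1 a x) = x, and conjugation by x^-1 acts on the generators
  as psi^3 = psi^-1.\<close>

fun rotate_factorization :: "gen list \<Rightarrow> gen list" where
  "rotate_factorization [a, b, c] = [b, c, (psi ^^ 3) a]"
| "rotate_factorization f = f"

lemma rotate_factorization_in:
  "f \<in> factorizations \<Longrightarrow> rotate_factorization f \<in> factorizations"
proof -
  have "\<forall>f \<in> set factorization_list. rotate_factorization f \<in> set factorization_list"
    by (simp add: factorization_list_def numeral_eq_Suc)
  then show "f \<in> factorizations \<Longrightarrow> rotate_factorization f \<in> factorizations"
    unfolding factorizations_eq by blast
qed

lemma factorization_eqI:
  assumes "f \<in> factorizations" "g \<in> factorizations" "take 2 f = take 2 g"
  shows "f = g"
proof -
  have "\<forall>f \<in> set factorization_list. \<forall>g \<in> set factorization_list. take 2 f = take 2 g \<longrightarrow> f = g"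
    by (simp add: factorization_list_def)
  then show ?thesis
    using assms unfolding factorizations_eq by blast
qed

definition face :: "word \<Rightarrow> gen list \<Rightarrow> vertex set" where
  "face u f = {vtx u, vtx (u @ pw (take 1 f)), vtx (u @ pw (take 2 f))}"

lemma Xfaces_iff: "T \<in> Xfaces \<longleftrightarrow> (\<exists>g f. f \<in> factorizations \<and> T = face g f)"
proof
  assume "T \<in> Xfaces"
  then obtain g a b c where "[a, b, c] \<in> factorizations"
    "T = {vtx g, vtx (g @ pw [a]), vtx (g @ pw [a, b])}"
    unfolding Xfaces_def by blast
  moreover have "face g [a, b, c] = {vtx g, vtx (g @ pw [a]), vtx (g @ pw [a, b])}"
    by (simp add: face_def)
  ultimately show "\<exists>g f. f \<in> factorizations \<and> T = face g f"
    by metis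
next
  assume "\<exists>g f. f \<in> factorizations \<and> T = face g f"
  then obtain g f where f: "f \<in> factorizations" and T: "T = face g f"
    by blast
  obtain a b c where abc: "f = [a, b, c]"
    using f factorization_cases by blast
  have "T = {vtx g, vtx (g @ pw [a]), vtx (g @ pw [a, b])}"
    unfolding T abc by (simp add: face_def)
  then show "T \<in> Xfaces"
    unfolding Xfaces_def using f abc by blast
qed

lemma vtx_append_factorization: "f \<in> factorizations \<Longrightarrow> vtx (u @ pw f) = vtx u"
  using vtx_beq[OF beq_append[OF beq_refl factorization_beq_xw]] vtx_append_xw by metis

lemma face_rotate:
  assumes "f \<in> factorizations"
  shows "face u f = face (u @ pw (take 1 f)) (rotate_factorization f)"
proof -
  obtain a b c where f: "f = [a, b, c]"
    using assms factorization_cases by blast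
  have "vtx (u @ pw [a, b, c]) = vtx u"
    using vtx_append_factorization[OF assms] f by simp
  then show ?thesis
    unfolding face_def f by auto
qed

lemma vtx_xpow_conj: "vtx (u @ xpow (int n) @ pw w) = vtx (u @ pw (map (psi ^^ n) w))"
proof -
  have "vtx (u @ xpow (int n) @ pw w) = vtx ((u @ pw (map (psi ^^ n) w)) @ xpow (int n))"
    using vtx_beq[OF beq_append[OF beq_refl xpow_conj]] by simp
  then show ?thesis
    by (simp only: vtx_append_xpow)
qed

lemma face_append_xpow: "face (u @ xpow (int n)) f = face u (map (psi ^^ n) f)"
  unfolding face_def by (simp add: take_map vtx_append_xpow vtx_xpow_conj)

lemma face_beq:
  assumes "beq u u'"
  shows "face u f = face u' f"
proof -
  have "vtx (u @ w) = vtx (u' @ w)" for w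
    by (rule vtx_beq[OF beq_append[OF assms beq_refl]])
  then show ?thesis
    unfolding face_def using vtx_beq[OF assms] by simp
qed

lemma face_same_vertex:
  assumes "vtx w = vtx w'"
  shows "\<exists>m. \<forall>f. face w' f = face w (map (psi ^^ m) f)"
proof -
  obtain k where k: "beq (w @ xpow k) w'"
    using assms vtx_eq_iff by blast
  show ?thesis
  proof (cases "k \<ge> 0")
    case True
    then have "beq w' (w @ xpow (int (nat k)))"
      using beq_sym[OF k] by simp
    then have "face w' f = face w (map (psi ^^ nat k) f)" for f
      by (simp only: face_beq face_append_xpow)
    then show ?thesis
      by blast
  next
    case False
    define n where "n = nat (- k)"
    have "beq w (w' @ xpow (int n))"
      using beq_sym[OF beq_xpow_flip[OF k]] False by (simp add: n_def)
    then have shifted: "face w g = face w' (map (psi ^^ n) g)" for g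
      by (simp only: face_beq face_append_xpow)
    have "psi ^^ n \<circ> psi ^^ (3 * n) = id"
      using psi_pow_mod[of "n + 3 * n"] by (simp add: funpow_add[symmetric])
    then have "map (psi ^^ n) (map (psi ^^ (3 * n)) f) = f" for f
      by (simp only: map_map list.map_id)
    then have "face w (map (psi ^^ (3 * n)) f) = face w' f" for f
      using shifted[of "map (psi ^^ (3 * n)) f"] by simp
    then show ?thesis
      by metis
  qed
qed

lemma map_psi_pow_in:
  assumes "f \<in> factorizations"
  shows "map (psi ^^ m) f \<in> factorizations"
proof (induction m)
  case 0
  show ?case using assms by simp
next
  case (Suc m)
  have "\<forall>f \<in> set factorization_list. map psi f \<in> set factorization_list"
    by (simp add: factorization_list_def)
  then have "map psi (map (psi ^^ m) f) \<in> set factorization_list"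
    using Suc unfolding factorizations_eq by blast
  then show ?case
    unfolding factorizations_eq by (simp add: comp_def)
qed

lemma face_rebase:
  assumes f: "f \<in> factorizations" and v: "vtx v \<in> face g f"
  shows "\<exists>f' \<in> factorizations. face g f = face v f'"
proof -
  obtain a b c where abc: "f = [a, b, c]"
    using f factorization_cases by blast
  let ?r = rotate_factorization
  have r1: "?r f \<in> factorizations" and r2: "?r (?r f) \<in> factorizations"
    using rotate_factorization_in f by blast+
  have face1: "face g f = face (g @ pw [a]) (?r f)"
    using face_rotate[OF f] abc by simp
  also have "\<dots> = face (g @ pw [a, b]) (?r (?r f))"
    using face_rotate[OF r1] abc by simp
  finally have face2: "face g f = face (g @ pw [a, b]) (?r (?r f))" .
  have "vtx v = vtx g \<or> vtx v = vtx (g @ pw [a]) \<or> vtx v = vtx (g @ pw [a, b])"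
    using v unfolding face_def abc by simp
  then obtain g' f' where f': "f' \<in> factorizations" "face g f = face g' f'" "vtx v = vtx g'"
    using f r1 r2 face1 face2 by metis
  obtain m where "face g' f' = face v (map (psi ^^ m) f')"
    using face_same_vertex[OF f'(3)] by blast
  then show ?thesis
    using f'(2) map_psi_pow_in[OF f'(1)] by metis
qed

lemma face_inj:
  assumes f: "f \<in> factorizations" and g: "g \<in> factorizations" and eq: "face u f = face u g"
  shows "f = g"
proof -
  obtain a b c where f_abc: "f = [a, b, c]"
    using f factorization_cases by blast
  obtain a' b' c' where g_abc: "g = [a', b', c']"
    using g factorization_cases by blast
  have faces: "face u f = {vtx u, vtx (u @ pw [a]), vtx (u @ pw [a, b])}"
    "face u g = {vtx u, vtx (u @ pw [a']), vtx (u @ pw [a', b'])}"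
    unfolding face_def f_abc g_abc by simp_all
  have "vtx (u @ pw [a]) \<in> face u g"
    using eq faces by blast
  moreover have "vtx (u @ pw [a]) \<noteq> vtx (u @ pw [])" "vtx (u @ pw [a]) \<noteq> vtx (u @ pw [a', b'])"
    by (rule vtx_neq_if_length_mod_neq, simp)+
  ultimately have "vtx (u @ pw [a]) = vtx (u @ pw [a'])"
    unfolding faces by auto
  then have a: "a = a'"
    by (simp only: vtx_gen_eq_iff)
  have "vtx (u @ pw [a, b]) \<in> face u g"
    using eq faces by blast
  moreover have "vtx (u @ pw [a, b]) \<noteq> vtx (u @ pw [])" "vtx (u @ pw [a, b]) \<noteq> vtx (u @ pw [a'])"
    by (rule vtx_neq_if_length_mod_neq, simp)+
  ultimately have "vtx ((u @ pw [a]) @ pw [b]) = vtx ((u @ pw [a]) @ pw [b'])"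
    unfolding faces a by auto
  then have "b = b'"
    by (simp only: vtx_gen_eq_iff)
  then show ?thesis
    using factorization_eqI[OF f g] a f_abc g_abc by simp
qed

definition edge :: "word \<Rightarrow> gen \<Rightarrow> vertex set" where
  "edge v t = {vtx v, vtx (v @ pw [t])}"

definition faces_at :: "vertex set \<Rightarrow> vertex set set" where
  "faces_at e = {T \<in> Xfaces. e \<subseteq> T}"

lemma card_edge: "card (edge v t) = 2"
proof -
  have "vtx (v @ pw []) \<noteq> vtx (v @ pw [t])"
    by (rule vtx_neq_if_length_mod_neq) simp
  then show ?thesis
    unfolding edge_def by simp
qed

lemma edges_subset_face:
  assumes f: "[a, b, c] \<in> factorizations"
  shows "edge v a \<subseteq> face v [a, b, c]" "edge (v @ pw [a]) b \<subseteq> face v [a, b, c]"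
    "edge (v @ pw [a, b]) c \<subseteq> face v [a, b, c]"
proof -
  have "vtx (v @ pw [a, b, c]) = vtx v"
    by (rule vtx_append_factorization[OF f])
  then show "edge v a \<subseteq> face v [a, b, c]" "edge (v @ pw [a]) b \<subseteq> face v [a, b, c]"
    "edge (v @ pw [a, b]) c \<subseteq> face v [a, b, c]"
    unfolding edge_def face_def by simp_all
qed

lemma two_subset_of_three:
  assumes "card e = 2" "e \<subseteq> {p, q, r}"
  shows "e = {p, q} \<or> e = {q, r} \<or> e = {p, r}"
proof -
  obtain x y where "e = {x, y}" "x \<noteq> y"
    using assms(1) by (meson card_2_iff)
  then show ?thesis
    using assms(2) by auto
qed

lemma two_subset_face_is_edge:
  assumes f: "[a, b, c] \<in> factorizations" and e: "e \<subseteq> face v [a, b, c]" "card e = 2"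
  shows "e = edge v a \<or> e = edge (v @ pw [a]) b \<or> e = edge (v @ pw [a, b]) c"
proof -
  have "vtx (v @ pw [a, b, c]) = vtx v"
    by (rule vtx_append_factorization[OF f])
  then have "edge v a = {vtx v, vtx (v @ pw [a])}"
    "edge (v @ pw [a]) b = {vtx (v @ pw [a]), vtx (v @ pw [a, b])}"
    "edge (v @ pw [a, b]) c = {vtx v, vtx (v @ pw [a, b])}"
    unfolding edge_def by (simp_all add: insert_commute)
  moreover have "face v [a, b, c] = {vtx v, vtx (v @ pw [a]), vtx (v @ pw [a, b])}"
    unfolding face_def by simp
  ultimately show ?thesis
    using two_subset_of_three[OF e(2)] e(1) by simp
qed

lemma faces_at_edge: "faces_at (edge v t) = face v ` {f \<in> factorizations. hd f = t}"
proof (intro equalityI subsetI)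
  fix T
  assume "T \<in> faces_at (edge v t)"
  then have T: "T \<in> Xfaces" and sub: "edge v t \<subseteq> T"
    unfolding faces_at_def by blast+
  obtain g f0 where "f0 \<in> factorizations" "T = face g f0"
    using T Xfaces_iff by blast
  moreover have "vtx v \<in> T"
    using sub unfolding edge_def by blast
  ultimately obtain f where f: "f \<in> factorizations" "T = face v f"
    using face_rebase by metis
  then obtain a b c where abc: "f = [a, b, c]"
    using factorization_cases by blast
  have "vtx (v @ pw [t]) \<in> face v f"
    using sub f(2) unfolding edge_def by blast
  moreover have "vtx (v @ pw [t]) \<noteq> vtx (v @ pw [])" "vtx (v @ pw [t]) \<noteq> vtx (v @ pw [a, b])"
    by (rule vtx_neq_if_length_mod_neq, simp)+
  ultimately have "vtx (v @ pw [t]) = vtx (v @ pw [a])"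
    unfolding face_def abc by auto
  then have "hd f = t"
    unfolding abc by (simp only: vtx_gen_eq_iff list.sel(1))
  then show "T \<in> face v ` {f \<in> factorizations. hd f = t}"
    using f by blast
next
  fix T
  assume "T \<in> face v ` {f \<in> factorizations. hd f = t}"
  then obtain f where f: "f \<in> factorizations" "hd f = t" "T = face v f"
    by blast
  then obtain b c where "f = [t, b, c]"
    using factorization_cases by (metis list.sel(1))
  then show "T \<in> faces_at (edge v t)"
    unfolding faces_at_def using f edges_subset_face(1) Xfaces_iff by blast
qed

lemma factorizations_with_head_eq:
  "{f \<in> factorizations. hd f = t} = set (filter (\<lambda>f. hd f = t) factorization_list)"
  unfolding factorizations_eq by (simp only: set_filter)

lemma card_factorizations_with_head:
  "card {f \<in> factorizations. hd f = t} = (if t \<in> {B, D} then 2 else 3)"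
  unfolding factorizations_with_head_eq by (cases t) (simp_all add: factorization_list_def)

lemma inj_on_face: "inj_on (face v) factorizations"
  using face_inj by (meson inj_onI)

lemma valence_edge: "valence (edge v t) = (if t \<in> {B, D} then 2 else 3)"
proof -
  have "card (faces_at (edge v t)) = card {f \<in> factorizations. hd f = t}"
    unfolding faces_at_edge by (rule card_image[OF inj_on_subset[OF inj_on_face]]) blast
  then show ?thesis
    unfolding valence_def faces_at_def[symmetric] card_factorizations_with_head .
qed

section \<open>Lozenges\<close>

lemma face_inter_face:
  assumes f: "[t, b, c] \<in> factorizations" and g: "[t, b', c'] \<in> factorizations"
    and ne: "[t, b, c] \<noteq> [t, b', c']"
  shows "face v [t, b, c] \<inter> face v [t, b', c'] = edge v t"
proof -
  have "b \<noteq> b'"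
    using factorization_eqI[OF f g] ne by auto
  then have "vtx ((v @ pw [t]) @ pw [b]) \<noteq> vtx ((v @ pw [t]) @ pw [b'])"
    by (simp only: vtx_gen_eq_iff not_False_eq_True)
  moreover have "vtx (v @ pw [t, s]) \<noteq> vtx (v @ pw [])" "vtx (v @ pw [t, s]) \<noteq> vtx (v @ pw [t])"
    for s
    by (rule vtx_neq_if_length_mod_neq, simp)+
  ultimately show ?thesis
    unfolding face_def edge_def by auto
qed

lemma is_lozenge_faces_at_edge:
  assumes t: "t \<in> {B, D}"
  shows "is_lozenge (faces_at (edge v t))"
proof -
  have "card {f \<in> factorizations. hd f = t} = 2"
    using t card_factorizations_with_head by simp
  then obtain f g where fg: "{f \<in> factorizations. hd f = t} = {f, g}" "f \<noteq> g"
    by (meson card_2_iff)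
  then have f: "f \<in> factorizations" "hd f = t" and g: "g \<in> factorizations" "hd g = t"
    by blast+
  obtain b c where f_eq: "f = [t, b, c]"
    using f factorization_cases by (metis list.sel(1))
  obtain b' c' where g_eq: "g = [t, b', c']"
    using g factorization_cases by (metis list.sel(1))
  have R: "faces_at (edge v t) = {face v f, face v g}"
    unfolding faces_at_edge fg by simp
  have ne: "face v f \<noteq> face v g"
    using face_inj f g fg(2) by blast
  have inter: "face v f \<inter> face v g = edge v t"
    using face_inter_face[of t b c b' c' v] f(1) g(1) fg(2) unfolding f_eq g_eq by blast
  have X: "face v f \<in> Xfaces" "face v g \<in> Xfaces"
    using f g Xfaces_iff by blast+
  have val: "valence (edge v t) = 2"
    using t valence_edge by simp
  show ?thesis
    unfolding is_lozenge_def R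
    by (rule exI[of _ "face v f"], rule exI[of _ "face v g"])
      (simp only: X ne inter card_edge val simp_thms)
qed

lemma lozenge_eq_faces_at_edge:
  assumes "is_lozenge R"
  obtains v t where "t \<in> {B, D}" "R = faces_at (edge v t)"
proof -
  obtain T1 T2 where T: "T1 \<in> Xfaces" "T2 \<in> Xfaces" "T1 \<noteq> T2" "R = {T1, T2}"
    and d: "card (T1 \<inter> T2) = 2" "valence (T1 \<inter> T2) = 2"
    using assms unfolding is_lozenge_def by blast
  obtain g f where f: "f \<in> factorizations" "T1 = face g f"
    using T(1) Xfaces_iff by blast
  obtain a b c where abc: "f = [a, b, c]"
    using f(1) factorization_cases by blast
  have "T1 \<inter> T2 \<subseteq> face g [a, b, c]"
    using f(2) abc by blast
  then have "T1 \<inter> T2 = edge g a \<or> T1 \<inter> T2 = edge (g @ pw [a]) b \<or> T1 \<inter> T2 = edge (g @ pw [a, b]) c"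
    using two_subset_face_is_edge f(1) abc d(1) by blast
  then obtain v t where vt: "T1 \<inter> T2 = edge v t"
    by blast
  have t: "t \<in> {B, D}"
    using d(2) valence_edge[of v t] vt by (simp split: if_splits)
  have sub: "{T1, T2} \<subseteq> faces_at (edge v t)"
    unfolding faces_at_def using T vt by blast
  have card: "card (faces_at (edge v t)) = 2"
    using d(2) vt unfolding valence_def faces_at_def by simp
  then have "finite (faces_at (edge v t))"
    by (simp add: card_ge_0_finite)
  then have "R = faces_at (edge v t)"
    using card_subset_eq[OF _ sub] card T(3,4) by simp
  with t show thesis
    by (rule that)
qed

lemma edge_D_eq: "edge v D = edge (v @ inv_word xw) B"
proof -
  let ?u = "v @ inv_word xw"
  have xpow_m1: "xpow (- 1) = inv_word xw"
    by (simp add: xpow_def)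
  have "vtx ?u = vtx v"
    using vtx_append_xpow[of v "- 1"] xpow_m1 by simp
  moreover have "beq (?u @ xpow (int 1)) v"
    using beq_append[OF beq_refl beq_inv_word_append, of v xw] by (simp add: xpow_def)
  then have "vtx ((?u @ xpow (int 1)) @ pw [D]) = vtx (v @ pw [D])"
    by (rule vtx_beq[OF beq_append[OF _ beq_refl]])
  then have "vtx (v @ pw [D]) = vtx (?u @ pw [B])"
    using vtx_xpow_conj[of ?u 1 "[D]"] by simp
  ultimately show ?thesis
    unfolding edge_def by simp
qed

lemma lozenge_eq_faces_at_B_edge:
  assumes "is_lozenge R"
  obtains h where "R = faces_at (edge h B)"
  using lozenge_eq_faces_at_edge[OF assms] edge_D_eq by (metis insert_iff singletonD)

lemma factorization_at_most_one_BD: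
  assumes "[a, b, c] \<in> factorizations"
  shows "\<not> (a \<in> {B, D} \<and> b \<in> {B, D})" "\<not> (a \<in> {B, D} \<and> c \<in> {B, D})"
    "\<not> (b \<in> {B, D} \<and> c \<in> {B, D})"
proof -
  have "\<forall>f \<in> set factorization_list. length (filter (\<lambda>s. s \<in> {B, D}) f) \<le> 1"
    by (simp add: factorization_list_def)
  then have "length (filter (\<lambda>s. s \<in> {B, D}) [a, b, c]) \<le> 1"
    using assms unfolding factorizations_eq by blast
  then show "\<not> (a \<in> {B, D} \<and> b \<in> {B, D})" "\<not> (a \<in> {B, D} \<and> c \<in> {B, D})"
    "\<not> (b \<in> {B, D} \<and> c \<in> {B, D})"
    by (auto split: if_splits)
qed

lemma valence_two_edge_of_face:
  assumes f: "[a, b, c] \<in> factorizations" and e: "e \<subseteq> face g [a, b, c]" "card e = 2" "valence e = 2"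
  shows "(a \<in> {B, D} \<and> e = edge g a) \<or> (b \<in> {B, D} \<and> e = edge (g @ pw [a]) b)
    \<or> (c \<in> {B, D} \<and> e = edge (g @ pw [a, b]) c)"
proof -
  have "valence (edge w s) = 2 \<Longrightarrow> s \<in> {B, D}" for w s
    using valence_edge[of w s] by (simp split: if_splits)
  then show ?thesis
    using two_subset_face_is_edge[OF f e(1,2)] e(3) by blast
qed

lemma lozenge_unique:
  assumes R: "is_lozenge R" and R': "is_lozenge R'" and T: "T \<in> R" "T \<in> R'"
  shows "R = R'"
proof -
  obtain v t where t: "t \<in> {B, D}" "R = faces_at (edge v t)"
    using lozenge_eq_faces_at_edge[OF R] by blast
  obtain v' t' where t': "t' \<in> {B, D}" "R' = faces_at (edge v' t')"
    using lozenge_eq_faces_at_edge[OF R'] by blast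
  have "T \<in> Xfaces" and sub: "edge v t \<subseteq> T" "edge v' t' \<subseteq> T"
    using T t(2) t'(2) unfolding faces_at_def by blast+
  then obtain g a b c where f: "[a, b, c] \<in> factorizations" "T = face g [a, b, c]"
    using Xfaces_iff factorization_cases by metis
  have val: "valence (edge v t) = 2" "valence (edge v' t') = 2"
    using t(1) t'(1) valence_edge by auto
  have "edge v t = edge v' t'"
    using valence_two_edge_of_face[OF f(1) sub(1)[unfolded f(2)] card_edge val(1)]
      valence_two_edge_of_face[OF f(1) sub(2)[unfolded f(2)] card_edge val(2)]
      factorization_at_most_one_BD[OF f(1)]
    by blast
  then show ?thesis
    using t(2) t'(2) by simp
qed

lemma is_triangle_face_iff:
  assumes f: "f \<in> factorizations"
  shows "is_triangle (face v f) \<longleftrightarrow> B \<notin> set f \<and> D \<notin> set f"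
proof -
  obtain a b c where abc: "f = [a, b, c]"
    using f factorization_cases by blast
  have X: "face v f \<in> Xfaces"
    using f Xfaces_iff by blast
  have in_lozenge_iff:
    "(\<exists>R. is_lozenge R \<and> face v f \<in> R) \<longleftrightarrow> a \<in> {B, D} \<or> b \<in> {B, D} \<or> c \<in> {B, D}"
  proof
    assume "\<exists>R. is_lozenge R \<and> face v f \<in> R"
    then obtain R where R: "is_lozenge R" "face v f \<in> R"
      by blast
    obtain w t where t: "t \<in> {B, D}" "R = faces_at (edge w t)"
      using lozenge_eq_faces_at_edge[OF R(1)] by blast
    have sub: "edge w t \<subseteq> face v [a, b, c]"
      using R(2) t(2) abc unfolding faces_at_def by blast
    have "valence (edge w t) = 2"
      using t(1) valence_edge by auto
    then show "a \<in> {B, D} \<or> b \<in> {B, D} \<or> c \<in> {B, D}"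
      using valence_two_edge_of_face[OF f[unfolded abc] sub card_edge] by meson
  next
    assume "a \<in> {B, D} \<or> b \<in> {B, D} \<or> c \<in> {B, D}"
    then obtain w s where ws: "s \<in> {B, D}" "edge w s \<subseteq> face v f"
      using edges_subset_face[OF f[unfolded abc]] unfolding abc by meson
    have "is_lozenge (faces_at (edge w s))" "face v f \<in> faces_at (edge w s)"
      using is_lozenge_faces_at_edge[OF ws(1)] X ws(2) unfolding faces_at_def by simp_all
    then show "\<exists>R. is_lozenge R \<and> face v f \<in> R"
      by blast
  qed
  have "B \<notin> set f \<and> D \<notin> set f \<longleftrightarrow> \<not> (a \<in> {B, D} \<or> b \<in> {B, D} \<or> c \<in> {B, D})"
    unfolding abc by auto
  then show ?thesis
    unfolding is_triangle_def using X in_lozenge_iff by simp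
qed

lemma card_triangle_factorizations:
  assumes "t \<notin> {B, D}"
  shows "card {f \<in> factorizations. hd f = t \<and> B \<notin> set f \<and> D \<notin> set f} = 1"
proof -
  have "{f \<in> factorizations. hd f = t \<and> B \<notin> set f \<and> D \<notin> set f}
      = set (filter (\<lambda>f. hd f = t \<and> B \<notin> set f \<and> D \<notin> set f) factorization_list)"
    unfolding factorizations_eq by (simp only: set_filter)
  then show ?thesis
    using assms by (cases t) (simp_all add: factorization_list_def)
qed

lemma triangles_at_edge:
  "{T. is_triangle T \<and> edge v t \<subseteq> T}
     = face v ` {f \<in> factorizations. hd f = t \<and> B \<notin> set f \<and> D \<notin> set f}"
proof (intro equalityI subsetI)
  fix T
  assume "T \<in> {T. is_triangle T \<and> edge v t \<subseteq> T}"
  then have T: "is_triangle T" "T \<in> faces_at (edge v t)"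
    unfolding is_triangle_def faces_at_def by simp_all
  obtain f where f: "T = face v f" "f \<in> {f \<in> factorizations. hd f = t}"
    using T(2) unfolding faces_at_edge by (rule imageE)
  then have "B \<notin> set f \<and> D \<notin> set f"
    using is_triangle_face_iff[of f v] T(1) by simp
  with f show "T \<in> face v ` {f \<in> factorizations. hd f = t \<and> B \<notin> set f \<and> D \<notin> set f}"
    by simp
next
  fix T
  assume "T \<in> face v ` {f \<in> factorizations. hd f = t \<and> B \<notin> set f \<and> D \<notin> set f}"
  then obtain f where f: "T = face v f" "f \<in> factorizations" "hd f = t" "B \<notin> set f \<and> D \<notin> set f"
    by blast
  have "face v f \<in> faces_at (edge v t)"
    unfolding faces_at_edge using f(2,3) by (intro imageI) simp
  moreover have "is_triangle (face v f)"
    using is_triangle_face_iff[OF f(2), of v] f(4) by (rule iffD2)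
  ultimately show "T \<in> {T. is_triangle T \<and> edge v t \<subseteq> T}"
    unfolding faces_at_def f(1) by simp
qed

lemma unique_triangle_at_edge:
  assumes t: "t \<notin> {B, D}"
  shows "\<exists>!T. is_triangle T \<and> edge v t \<subseteq> T"
proof -
  let ?S = "{f \<in> factorizations. hd f = t \<and> B \<notin> set f \<and> D \<notin> set f}"
  have inj: "inj_on (face v) ?S"
    by (rule inj_on_subset[OF inj_on_face]) blast
  have "card {T. is_triangle T \<and> edge v t \<subseteq> T} = Suc 0"
    unfolding triangles_at_edge card_image[OF inj] card_triangle_factorizations[OF t] by simp
  then have "\<exists>T1. {T. is_triangle T \<and> edge v t \<subseteq> T} = {T1}"
    by (simp only: card_1_singleton_iff)
  then obtain T1 where "{T. is_triangle T \<and> edge v t \<subseteq> T} = {T1}"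
    by blast
  then have "\<forall>T. is_triangle T \<and> edge v t \<subseteq> T \<longleftrightarrow> T = T1"
    by (simp add: set_eq_iff)
  then show ?thesis
    by (intro ex1I[of _ T1]) simp_all
qed

lemma card_two_pigeonhole:
  assumes "card N = 2" "x \<in> N" "y \<in> N" "z \<in> N"
  shows "x = y \<or> x = z \<or> y = z"
proof (rule ccontr)
  assume "\<not> (x = y \<or> x = z \<or> y = z)"
  then have "card {x, y, z} = 3"
    by simp
  moreover have "card {x, y, z} \<le> card N"
    using assms by (intro card_mono) (simp_all add: card_ge_0_finite)
  ultimately show False
    using assms(1) by simp
qed

lemma card_non_triangles_at_edge:
  assumes t: "t \<notin> {B, D}"
  shows "card {T \<in> faces_at (edge v t). \<not> is_triangle T} = 2"
proof -
  obtain T0 where T0: "is_triangle T0 \<and> edge v t \<subseteq> T0"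
    and unique: "\<forall>T. is_triangle T \<and> edge v t \<subseteq> T \<longrightarrow> T = T0"
    using unique_triangle_at_edge[OF t] by (rule ex1E)
  have T0_in: "T0 \<in> faces_at (edge v t)"
    using T0 unfolding is_triangle_def faces_at_def by simp
  have "{T \<in> faces_at (edge v t). \<not> is_triangle T} = faces_at (edge v t) - {T0}"
  proof (intro equalityI subsetI)
    fix T
    assume "T \<in> {T \<in> faces_at (edge v t). \<not> is_triangle T}"
    then show "T \<in> faces_at (edge v t) - {T0}"
      using T0 by auto
  next
    fix T
    assume T: "T \<in> faces_at (edge v t) - {T0}"
    then have "edge v t \<subseteq> T" "T \<noteq> T0"
      unfolding faces_at_def by simp_all
    then have "\<not> is_triangle T"
      using unique by blast
    then show "T \<in> {T \<in> faces_at (edge v t). \<not> is_triangle T}"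
      using T by simp
  qed
  moreover have "card (faces_at (edge v t)) = 3"
    using valence_edge[of v t] t unfolding valence_def faces_at_def by simp
  ultimately show ?thesis
    using T0_in by (simp add: card_Diff_singleton_if)
qed

lemma at_most_two_lozenges_at_edge:
  assumes t: "t \<notin> {B, D}"
    and R: "is_lozenge R1" "is_lozenge R2" "is_lozenge R3"
    and touch: "\<exists>T \<in> R1. edge v t \<subseteq> T" "\<exists>T \<in> R2. edge v t \<subseteq> T" "\<exists>T \<in> R3. edge v t \<subseteq> T"
  shows "R1 = R2 \<or> R1 = R3 \<or> R2 = R3"
proof -
  let ?N = "{T \<in> faces_at (edge v t). \<not> is_triangle T}"
  have in_N: "T \<in> ?N" if "is_lozenge R" "T \<in> R" "edge v t \<subseteq> T" for R T
  proof -
    have "T \<in> Xfaces"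
      using that(1,2) unfolding is_lozenge_def by blast
    moreover have "\<not> is_triangle T"
      using that(1,2) unfolding is_triangle_def by blast
    ultimately show ?thesis
      using that(3) unfolding faces_at_def by simp
  qed
  obtain T1 T2 T3 where T: "T1 \<in> R1" "T2 \<in> R2" "T3 \<in> R3"
    and N: "T1 \<in> ?N" "T2 \<in> ?N" "T3 \<in> ?N"
    using touch in_N R by meson
  have "T1 = T2 \<or> T1 = T3 \<or> T2 = T3"
    using card_two_pigeonhole[OF card_non_triangles_at_edge[OF t] N] .
  then show ?thesis
    using lozenge_unique R T by blast
qed

section \<open>Parallelograms across the boundary of a lozenge\<close>

lemma is_parallelogramI:
  assumes "distinct [p0, p1, p2, q0, q1, q2]"
  shows "is_parallelogram ({{p0, p1, q0}, {p1, q0, q1}} \<union> {{p1, p2, q1}, {p2, q1, q2}})"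
proof -
  let ?\<phi> = "(!) [p0, p1, p2, q0, q1, q2]"
  have "inj_on ?\<phi> {0..5}"
    by (rule inj_on_nth[OF assms]) auto
  then show ?thesis
    unfolding is_parallelogram_def by (intro exI[of _ ?\<phi>]) (simp add: insert_commute)
qed

lemma lozenges_of_parallelogram_differ:
  assumes "distinct [p0, p1, p2, q0, q1, q2]"
  shows "{{p0, p1, q0}, {p1, q0, q1}} \<noteq> {{p1, p2, q1}, {p2, q1, q2}}"
proof
  assume "{{p0, p1, q0}, {p1, q0, q1}} = {{p1, p2, q1}, {p2, q1, q2}}"
  then have "q2 \<in> {p0, p1, q0} \<or> q2 \<in> {p1, q0, q1}"
    by (metis insertCI insertE singletonD)
  then show False
    using assms by auto
qed

lemma faces_at_edge_B: "faces_at (edge h B) = {face h [B, A, C], face h [B, C, A]}"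
  unfolding faces_at_edge factorizations_with_head_eq by (simp add: factorization_list_def)

lemma faces_at_edge_D: "faces_at (edge h D) = {face h [D, E, F], face h [D, F, E]}"
  unfolding faces_at_edge factorizations_with_head_eq by (simp add: factorization_list_def)

lemma boundary_edges_of_lozenge:
  assumes "boundary_edge (faces_at (edge h B)) e"
  shows "e = edge (h @ pw [B]) A \<or> e = edge (h @ pw [B, A]) C \<or> e = edge (h @ pw [B]) C
    \<or> e = edge (h @ pw [B, C]) A"
proof -
  have BAC: "[B, A, C] \<in> factorizations" and BCA: "[B, C, A] \<in> factorizations"
    unfolding factorizations_eq factorization_list_def by simp_all
  have e: "card e = 2" "e \<subseteq> face h [B, A, C] \<or> e \<subseteq> face h [B, C, A]"
    and not_diagonal: "e \<noteq> edge h B"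
    using assms edges_subset_face(1)[OF BAC] edges_subset_face(1)[OF BCA]
    unfolding boundary_edge_def faces_at_edge_B by blast+
  then show ?thesis
    using two_subset_face_is_edge[OF BAC _ e(1)] two_subset_face_is_edge[OF BCA _ e(1)] by blast
qed

definition parallelogram_partner :: "vertex set set \<Rightarrow> vertex set \<Rightarrow> vertex set set \<Rightarrow> bool" where
  "parallelogram_partner R e R' \<longleftrightarrow>
     is_lozenge R' \<and> R' \<noteq> R \<and> (\<exists>T \<in> R'. e \<subseteq> T) \<and> is_parallelogram (R \<union> R')"

lemma parallelogram_partnerI:
  assumes "R = {{p0, p1, q0}, {p1, q0, q1}}" "R' = {{p1, p2, q1}, {p2, q1, q2}}" "is_lozenge R'"
    "e = {p1, q1}" "distinct [p0, p1, p2, q0, q1, q2]"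
  shows "parallelogram_partner R e R'"
  unfolding parallelogram_partner_def
  using assms is_parallelogramI[OF assms(5)] lozenges_of_parallelogram_differ[OF assms(5)] by auto

text \<open>In each of the four cases below the partner is the pair of faces around a d-edge; the six
  vertices are listed in the order p0, p1, p2, q0, q1, q2 of the definition of is_parallelogram,
  and the boundary edge is p1 q1.\<close>

lemma parallelogram_partner_B_C:
  "parallelogram_partner (faces_at (edge h B)) (edge (h @ pw [B]) C)
     (faces_at (edge (h @ pw [B, C]) D))"
proof (rule parallelogram_partnerI)
  let ?v = "\<lambda>w. vtx (h @ pw w)"
  have x: "vtx ((h @ pw [B]) @ pw [C, D, F]) = ?v [B]"
    by (rule vtx_append_factorization, simp add: factorizations_eq factorization_list_def)+
  then have "face h [B, A, C] = {?v [B, A], ?v [B], vtx h}"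
    "face h [B, C, A] = {?v [B], vtx h, ?v [B, C]}"
    "face (h @ pw [B, C]) [D, E, F] = {?v [B, C, D], ?v [B, C], ?v [B, C, D, E]}"
    "face (h @ pw [B, C]) [D, F, E] = {?v [B], ?v [B, C, D], ?v [B, C]}"
    unfolding face_def by (simp_all add: insert_commute)
  then show "faces_at (edge h B) = {{?v [B, A], ?v [B], vtx h},
      {?v [B], vtx h, ?v [B, C]}}"
    and "faces_at (edge (h @ pw [B, C]) D) = {{?v [B], ?v [B, C, D], ?v [B, C]},
      {?v [B, C, D], ?v [B, C], ?v [B, C, D, E]}}"
    unfolding faces_at_edge_B faces_at_edge_D by (simp_all only: insert_commute)
  show "edge (h @ pw [B]) C = {?v [B], ?v [B, C]}"
    using x unfolding edge_def by (simp add: insert_commute)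
  show "is_lozenge (faces_at (edge (h @ pw [B, C]) D))"
    by (rule is_lozenge_faces_at_edge) simp
  show "distinct [?v [B, A], ?v [B], ?v [B, C, D], vtx h, ?v [B, C], ?v [B, C, D, E]]"
    using distinct_vtx[of "[[B, A], [B], [B, C, D], [], [B, C], [B, C, D, E]]" h]
    by (simp add: vertex_invariant_def xpow_def xw_def inv_word_def numeral_eq_Suc)
qed

lemma parallelogram_partner_B_A:
  "parallelogram_partner (faces_at (edge h B)) (edge (h @ pw [B]) A)
     (faces_at (edge (h @ pw [B, A]) D))"
proof (rule parallelogram_partnerI)
  let ?v = "\<lambda>w. vtx (h @ pw w)"
  have x: "vtx ((h @ pw [B]) @ pw [A, D, E]) = ?v [B]"
    by (rule vtx_append_factorization, simp add: factorizations_eq factorization_list_def)+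
  then have "face h [B, A, C] = {?v [B], vtx h, ?v [B, A]}"
    "face h [B, C, A] = {?v [B, C], ?v [B], vtx h}"
    "face (h @ pw [B, A]) [D, E, F] = {?v [B], ?v [B, A, D], ?v [B, A]}"
    "face (h @ pw [B, A]) [D, F, E] = {?v [B, A, D], ?v [B, A], ?v [B, A, D, F]}"
    unfolding face_def by (simp_all add: insert_commute)
  then show "faces_at (edge h B) = {{?v [B, C], ?v [B], vtx h},
      {?v [B], vtx h, ?v [B, A]}}"
    and "faces_at (edge (h @ pw [B, A]) D) = {{?v [B], ?v [B, A, D], ?v [B, A]},
      {?v [B, A, D], ?v [B, A], ?v [B, A, D, F]}}"
    unfolding faces_at_edge_B faces_at_edge_D by (simp_all only: insert_commute)
  show "edge (h @ pw [B]) A = {?v [B], ?v [B, A]}"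
    using x unfolding edge_def by (simp add: insert_commute)
  show "is_lozenge (faces_at (edge (h @ pw [B, A]) D))"
    by (rule is_lozenge_faces_at_edge) simp
  show "distinct [?v [B, C], ?v [B], ?v [B, A, D], vtx h, ?v [B, A], ?v [B, A, D, F]]"
    using distinct_vtx[of "[[B, C], [B], [B, A, D], [], [B, A], [B, A, D, F]]" h]
    by (simp add: vertex_invariant_def xpow_def xw_def inv_word_def numeral_eq_Suc)
qed

lemma parallelogram_partner_BC_A:
  "parallelogram_partner (faces_at (edge h B)) (edge (h @ pw [B, C]) A)
     (faces_at (edge (h @ pw [B, C, A, C]) D))"
proof (rule parallelogram_partnerI)
  let ?v = "\<lambda>w. vtx (h @ pw w)"
  have x: "vtx (h @ pw [B, C, A]) = vtx h"
    "vtx ((h @ pw [B, C]) @ pw [A, C, D]) = ?v [B, C]"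
    "vtx ((h @ pw [B, C, A]) @ pw [C, D, F]) = ?v [B, C, A]"
    by (rule vtx_append_factorization, simp add: factorizations_eq factorization_list_def)+
  then have "face h [B, A, C] = {?v [B, A], vtx h, ?v [B]}"
    "face h [B, C, A] = {vtx h, ?v [B], ?v [B, C]}"
    "face (h @ pw [B, C, A, C]) [D, E, F] = {?v [B, C, A, C], ?v [B, C], ?v [B, C, A, C, D, E]}"
    "face (h @ pw [B, C, A, C]) [D, F, E] = {vtx h, ?v [B, C, A, C], ?v [B, C]}"
    unfolding face_def by (simp_all add: insert_commute)
  then show "faces_at (edge h B) = {{?v [B, A], vtx h, ?v [B]},
      {vtx h, ?v [B], ?v [B, C]}}"
    and "faces_at (edge (h @ pw [B, C, A, C]) D) = {{vtx h, ?v [B, C, A, C], ?v [B, C]},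
      {?v [B, C, A, C], ?v [B, C], ?v [B, C, A, C, D, E]}}"
    unfolding faces_at_edge_B faces_at_edge_D by (simp_all only: insert_commute)
  show "edge (h @ pw [B, C]) A = {vtx h, ?v [B, C]}"
    using x unfolding edge_def by (simp add: insert_commute)
  show "is_lozenge (faces_at (edge (h @ pw [B, C, A, C]) D))"
    by (rule is_lozenge_faces_at_edge) simp
  show "distinct [?v [B, A], vtx h, ?v [B, C, A, C], ?v [B], ?v [B, C], ?v [B, C, A, C, D, E]]"
    using distinct_vtx[of "[[B, A], [], [B, C, A, C], [B], [B, C], [B, C, A, C, D, E]]" h]
    by (simp add: vertex_invariant_def xpow_def xw_def inv_word_def numeral_eq_Suc)
qed

lemma parallelogram_partner_BA_C:
  "parallelogram_partner (faces_at (edge h B)) (edge (h @ pw [B, A]) C)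
     (faces_at (edge (h @ pw [B, A, C, A]) D))"
proof (rule parallelogram_partnerI)
  let ?v = "\<lambda>w. vtx (h @ pw w)"
  have x: "vtx (h @ pw [B, A, C]) = vtx h"
    "vtx ((h @ pw [B, A]) @ pw [C, A, D]) = ?v [B, A]"
    "vtx ((h @ pw [B, A, C]) @ pw [A, D, E]) = ?v [B, A, C]"
    by (rule vtx_append_factorization, simp add: factorizations_eq factorization_list_def)+
  then have "face h [B, A, C] = {vtx h, ?v [B], ?v [B, A]}"
    "face h [B, C, A] = {?v [B, C], vtx h, ?v [B]}"
    "face (h @ pw [B, A, C, A]) [D, E, F] = {vtx h, ?v [B, A, C, A], ?v [B, A]}"
    "face (h @ pw [B, A, C, A]) [D, F, E] = {?v [B, A, C, A], ?v [B, A], ?v [B, A, C, A, D, F]}"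
    unfolding face_def by (simp_all add: insert_commute)
  then show "faces_at (edge h B) = {{?v [B, C], vtx h, ?v [B]},
      {vtx h, ?v [B], ?v [B, A]}}"
    and "faces_at (edge (h @ pw [B, A, C, A]) D) = {{vtx h, ?v [B, A, C, A], ?v [B, A]},
      {?v [B, A, C, A], ?v [B, A], ?v [B, A, C, A, D, F]}}"
    unfolding faces_at_edge_B faces_at_edge_D by (simp_all only: insert_commute)
  show "edge (h @ pw [B, A]) C = {vtx h, ?v [B, A]}"
    using x unfolding edge_def by (simp add: insert_commute)
  show "is_lozenge (faces_at (edge (h @ pw [B, A, C, A]) D))"
    by (rule is_lozenge_faces_at_edge) simp
  show "distinct [?v [B, C], vtx h, ?v [B, A, C, A], ?v [B], ?v [B, A], ?v [B, A, C, A, D, F]]"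
    using distinct_vtx[of "[[B, C], [], [B, A, C, A], [B], [B, A], [B, A, C, A, D, F]]" h]
    by (simp add: vertex_invariant_def xpow_def xw_def inv_word_def numeral_eq_Suc)
qed

lemma lozenge_boundary_edge_partner:
  assumes R: "is_lozenge R" and e: "boundary_edge R e"
  obtains v t R' where "e = edge v t" "t \<notin> {B, D}" "parallelogram_partner R e R'"
proof -
  obtain h where h: "R = faces_at (edge h B)"
    using lozenge_eq_faces_at_B_edge[OF R] .
  have "\<exists>v t R'. e = edge v t \<and> t \<notin> {B, D} \<and> parallelogram_partner (faces_at (edge h B)) e R'"
    using boundary_edges_of_lozenge[OF e[unfolded h]]
      parallelogram_partner_B_A[of h] parallelogram_partner_BA_C[of h]
      parallelogram_partner_B_C[of h] parallelogram_partner_BC_A[of h]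
    by (elim disjE) (intro exI conjI; simp)+
  then show thesis
    using that unfolding h by blast
qed

lemma parallelogram_partner_unique:
  assumes R: "is_lozenge R" "\<exists>T \<in> R. edge v t \<subseteq> T" and t: "t \<notin> {B, D}"
    and R': "parallelogram_partner R (edge v t) R'"
    and R'': "is_lozenge R''" "R'' \<noteq> R" "\<exists>T \<in> R''. edge v t \<subseteq> T"
  shows "R'' = R'"
proof -
  have "is_lozenge R'" "R' \<noteq> R" "\<exists>T \<in> R'. edge v t \<subseteq> T"
    using R' unfolding parallelogram_partner_def by simp_all
  then show ?thesis
    using at_most_two_lozenges_at_edge[OF t R(1) _ R''(1) R(2) _ R''(3)] R''(2) by blast
qed

theorem lemma11:
  assumes "is_lozenge R"
  shows "\<forall>e. boundary_edge R e \<longrightarrow>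
           (\<exists>!T. is_triangle T \<and> e \<subseteq> T) \<and>
           (\<exists>R'. is_lozenge R' \<and> R' \<noteq> R \<and> (\<exists>T\<in>R'. e \<subseteq> T) \<and> is_parallelogram (R \<union> R') \<and>
              (\<forall>R''. is_lozenge R'' \<and> R'' \<noteq> R \<and> (\<exists>T\<in>R''. e \<subseteq> T) \<longrightarrow> R'' = R'))"
proof (intro allI impI)
  fix e
  assume boundary: "boundary_edge R e"
  obtain v t R' where e: "e = edge v t" and t: "t \<notin> {B, D}"
    and partner: "parallelogram_partner R e R'"
    using lozenge_boundary_edge_partner[OF assms boundary] .
  have "\<exists>T \<in> R. e \<subseteq> T"
    using boundary unfolding boundary_edge_def by simp
  then have "\<forall>R''. is_lozenge R'' \<and> R'' \<noteq> R \<and> (\<exists>T\<in>R''. e \<subseteq> T) \<longrightarrow> R'' = R'"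
    using parallelogram_partner_unique[OF assms _ t partner[unfolded e]] unfolding e by blast
  then show "(\<exists>!T. is_triangle T \<and> e \<subseteq> T) \<and>
      (\<exists>R'. is_lozenge R' \<and> R' \<noteq> R \<and> (\<exists>T\<in>R'. e \<subseteq> T) \<and> is_parallelogram (R \<union> R') \<and>
        (\<forall>R''. is_lozenge R'' \<and> R'' \<noteq> R \<and> (\<exists>T\<in>R''. e \<subseteq> T) \<longrightarrow> R'' = R'))"
    using unique_triangle_at_edge[OF t, of v] partner unfolding e parallelogram_partner_def by blast
qed

end
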